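(* For every positive integer $n$ there exist $n$ Boolean attributes $A_1,\ldots,A_n$, a binary boosted tree $BT=\{F\}$ consisting of a single forest $F$ over them, and an instance $\vec x\in\vec X$ such that the unique tree-specific explanation for $\vec x$ given $BT$ is $t_{\vec x}$ itself, while $\emptyset$ is the unique sufficient reason for $\vec x$ given $BT$.
   Context: With Boolean attributes $A_1,\ldots,A_n$ (domain $\{0,1\}$), an instance is $\vec x=(v_1,\ldots,v_n)\in\{0,1\}^n$; $\vec X$ is the set of all instances; $t_{\vec x}=\{(A_i=v_i):i\in[n]\}$. An instance $\vec x'$ extends $t$ if $t\subseteq t_{\vec x'}$. A regression tree is a finite binary tree whose internal nodes are labelled by conditions $A_i=1$ and whose leaves are labelled by real numbers; $w(T,\vec x)$ is the label of the leaf reached by following, from the root, the branch determined by whether $\vec x$ satisfies each node's condition. For $t\subseteq t_{\vec x}$: $w_\downarrow(t,T)=\min\{w(T,\vec x'):\vec x'\text{ extends }t\}$, $w_\uparrow(t,T)=\max\{w(T,\vec x'):\vec x'\text{ extends }t\}$. A forest $F=\{T_1,\ldots,T_p\}$ has $w(F,\vec x)=\sum_k w(T_k,\vec x)$; for $BT=\{F\}$, $BT(\vec x)=1$ if $w(F,\vec x)>0$ and $0$ otherwise. An abductive explanation for $\vec x$ given $BT$ is $t\subseteq t_{\vec x}$ such that every $\vec x'$ extending $t$ has $BT(\vec x')=BT(\vec x)$; a sufficient reason is a subset-minimal abductive explanation. A tree-specific explanation for $\vec x$ given $BT$: if $BT(\vec x)=1$, a $t\subseteq t_{\vec x}$ with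 $\sum_k w_\downarrow(t,T_k)>0$ such that no proper subset of $t$ satisfies this; if $BT(\vec x)=0$, a $t\subseteq t_{\vec x}$ with $\sum_k w_\uparrow(t,T_k)\le 0$ such that no proper subset of $t$ satisfies this. *)

theory Defs
  imports Main Complex_Main
begin

text \<open>Attributes A_1..A_n are represented by indices 0..<n; an instance is a
  bool list of length n (entry i is the value of attribute i, True = 1).
  A term is a set of literals (i, v), meaning A_i = v.\<close>

datatype rtree = Leaf real | Node nat rtree rtree
  \<comment> \<open>Node i T1 T0: condition A_i = 1; T1 is followed if satisfied, T0 otherwise\<close>

fun tree_over :: "nat \<Rightarrow> rtree \<Rightarrow> bool" where
  "tree_over n (Leaf r) = True"
| "tree_over n (Node i t1 t0) = (i < n \<and> tree_over n t1 \<and> tree_over n t0)"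

fun wt :: "rtree \<Rightarrow> bool list \<Rightarrow> real" where
  "wt (Leaf r) x = r"
| "wt (Node i t1 t0) x = (if x ! i then wt t1 x else wt t0 x)"

definition instances :: "nat \<Rightarrow> bool list set" where
  "instances n = {x. length x = n}"

definition term_of :: "bool list \<Rightarrow> (nat \<times> bool) set" where
  "term_of x = {(i, x ! i) | i. i < length x}"

definition extends :: "nat \<Rightarrow> (nat \<times> bool) set \<Rightarrow> bool list \<Rightarrow> bool" where
  "extends n t x' \<longleftrightarrow> x' \<in> instances n \<and> t \<subseteq> term_of x'"

definition w_down :: "nat \<Rightarrow> (nat \<times> bool) set \<Rightarrow> rtree \<Rightarrow> real" where
  "w_down n t T = Min {wt T x' | x'. extends n t x'}"

definition w_up :: "nat \<Rightarrow> (nat \<times> bool) set \<Rightarrow> rtree \<Rightarrow> real" where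
  "w_up n t T = Max {wt T x' | x'. extends n t x'}"

type_synonym forest = "rtree list"

definition wF :: "forest \<Rightarrow> bool list \<Rightarrow> real" where
  "wF F x = (\<Sum>T\<leftarrow>F. wt T x)"

definition BT :: "forest \<Rightarrow> bool list \<Rightarrow> bool" where
  "BT F x \<longleftrightarrow> wF F x > 0"

definition abductive :: "nat \<Rightarrow> forest \<Rightarrow> bool list \<Rightarrow> (nat \<times> bool) set \<Rightarrow> bool" where
  "abductive n F x t \<longleftrightarrow> t \<subseteq> term_of x \<and> (\<forall>x'. extends n t x' \<longrightarrow> BT F x' = BT F x)"

definition sufficient_reason :: "nat \<Rightarrow> forest \<Rightarrow> bool list \<Rightarrow> (nat \<times> bool) set \<Rightarrow> bool" where
  "sufficient_reason n F x t \<longleftrightarrow> abductive n F x t \<and> (\<forall>t'. t' \<subset> t \<longrightarrow> \<not> abductive n F x t')"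

definition ts_pos :: "nat \<Rightarrow> forest \<Rightarrow> (nat \<times> bool) set \<Rightarrow> bool" where
  "ts_pos n F t \<longleftrightarrow> (\<Sum>T\<leftarrow>F. w_down n t T) > 0"

definition ts_neg :: "nat \<Rightarrow> forest \<Rightarrow> (nat \<times> bool) set \<Rightarrow> bool" where
  "ts_neg n F t \<longleftrightarrow> (\<Sum>T\<leftarrow>F. w_up n t T) \<le> 0"

definition tree_specific :: "nat \<Rightarrow> forest \<Rightarrow> bool list \<Rightarrow> (nat \<times> bool) set \<Rightarrow> bool" where
  "tree_specific n F x t \<longleftrightarrow> t \<subseteq> term_of x \<and>
     (if BT F x then ts_pos n F t \<and> (\<forall>t'. t' \<subset> t \<longrightarrow> \<not> ts_pos n F t')
      else ts_neg n F t \<and> (\<forall>t'. t' \<subset> t \<longrightarrow> \<not> ts_neg n F t'))"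

end

theory Submission
  imports Defs
begin

text \<open>Pair each stump \<open>A\<^sub>i ? 1 : -1\<close> with its negation \<open>A\<^sub>i ? -1 : 1\<close>. The forest then
  has weight 0 on every instance, so every instance is classified 0 and the empty term is
  already an abductive explanation. But a pair of stumps contributes \<open>w\<^sub>\<up> = 1 + 1 = 2\<close>
  unless its attribute is fixed, in which case it contributes \<open>1 - 1 = 0\<close>; hence
  \<open>\<Sum> w\<^sub>\<up> \<le> 0\<close> forces every attribute to be fixed, and the only tree-specific
  explanation of any instance \<open>x\<close> is \<open>t\<^sub>x\<close>.\<close>

abbreviation stump :: "nat \<Rightarrow> real \<Rightarrow> real \<Rightarrow> rtree" where
  "stump i a b \<equiv> Node i (Leaf a) (Leaf b)"

definition cancelling_forest :: "nat \<Rightarrow> forest" where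
  "cancelling_forest n = map (\<lambda>i. stump i 1 (-1)) [0..<n] @ map (\<lambda>i. stump i (-1) 1) [0..<n]"

lemma extends_nth:
  assumes "extends n t y" "(i, v) \<in> t"
  shows "y ! i = v"
  using assms unfolding extends_def term_of_def by auto

lemma extends_self:
  assumes "x \<in> instances n" "t \<subseteq> term_of x"
  shows "extends n t x"
  using assms unfolding extends_def by simp

lemma extends_flip:
  assumes "x \<in> instances n" "t \<subseteq> term_of x" "(i, x ! i) \<notin> t"
  shows "extends n t (x[i := \<not> x ! i])"
  unfolding extends_def
proof
  show "x[i := \<not> x ! i] \<in> instances n"
    using assms(1) unfolding instances_def by simp
  show "t \<subseteq> term_of (x[i := \<not> x ! i])"
  proof
    fix p assume "p \<in> t"
    then obtain j where p: "p = (j, x ! j)" "j < length x" "j \<noteq> i"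
      using assms(2,3) unfolding term_of_def by auto
    then show "p \<in> term_of (x[i := \<not> x ! i])"
      unfolding term_of_def by auto
  qed
qed

lemma w_up_stump:
  assumes "x \<in> instances n" "t \<subseteq> term_of x" "i < n"
  shows "w_up n t (stump i a b) = (if (i, x ! i) \<in> t then wt (stump i a b) x else max a b)"
proof (cases "(i, x ! i) \<in> t")
  case True
  have "wt (stump i a b) y = wt (stump i a b) x" if "extends n t y" for y
    using extends_nth[OF that True] by simp
  then have "{wt (stump i a b) y | y. extends n t y} = {wt (stump i a b) x}"
    using extends_self[OF assms(1,2)] by blast
  then show ?thesis
    using True unfolding w_up_def by simp
next
  case False
  have "length x = n"
    using assms(1) unfolding instances_def by simp
  then have "{wt (stump i a b) x, wt (stump i a b) (x[i := \<not> x ! i])} = {a, b}"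
    using assms(3) by auto
  moreover have "{wt (stump i a b) y | y. extends n t y} \<subseteq> {a, b}"
    by auto
  ultimately have "{wt (stump i a b) y | y. extends n t y} = {a, b}"
    using extends_self[OF assms(1,2)] extends_flip[OF assms(1,2) False] by blast
  then show ?thesis
    using False unfolding w_up_def by (simp add: max_def)
qed

lemma sufficient_reason_iff_empty_if_BT_constant:
  assumes "\<And>y. BT F y = BT F x"
  shows "sufficient_reason n F x t \<longleftrightarrow> t = {}"
proof -
  have "abductive n F x s \<longleftrightarrow> s \<subseteq> term_of x" for s
    using assms unfolding abductive_def by simp
  then show ?thesis
    unfolding sufficient_reason_def by auto
qed

lemma tree_specific_neg_iff:
  assumes "\<not> BT F x"
    and ts_neg_iff: "\<And>s. s \<subseteq> term_of x \<Longrightarrow> ts_neg n F s \<longleftrightarrow> s = term_of x"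
  shows "tree_specific n F x t \<longleftrightarrow> t = term_of x"
  unfolding tree_specific_def using assms(1) ts_neg_iff
  by (metis psubsetE psubset_imp_subset subset_refl)

lemma sum_list_cancelling_forest:
  "(\<Sum>T\<leftarrow>cancelling_forest n. h T) = (\<Sum>i<n. h (stump i 1 (-1)) + h (stump i (-1) 1))"
  by (simp add: cancelling_forest_def sum_list_distinct_conv_sum_set atLeast0LessThan sum.distrib)

lemma wF_cancelling_forest: "wF (cancelling_forest n) y = 0"
  unfolding wF_def sum_list_cancelling_forest by (intro sum.neutral) simp

lemma sum_w_up_cancelling_forest:
  assumes "x \<in> instances n" "t \<subseteq> term_of x"
  shows "(\<Sum>T\<leftarrow>cancelling_forest n. w_up n t T) = (\<Sum>i<n. if (i, x ! i) \<in> t then 0 else 2)"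
  unfolding sum_list_cancelling_forest
  by (intro sum.cong) (simp_all add: w_up_stump[OF assms])

lemma ts_neg_cancelling_forest_iff:
  assumes "x \<in> instances n" "t \<subseteq> term_of x"
  shows "ts_neg n (cancelling_forest n) t \<longleftrightarrow> t = term_of x"
proof -
  let ?missing = "\<Sum>i<n. if (i, x ! i) \<in> t then 0 else 2::real"
  have "0 \<le> ?missing"
    by (intro sum_nonneg) simp
  then have "ts_neg n (cancelling_forest n) t \<longleftrightarrow> ?missing = 0"
    unfolding ts_neg_def sum_w_up_cancelling_forest[OF assms] by linarith
  also have "\<dots> \<longleftrightarrow> (\<forall>i<n. (i, x ! i) \<in> t)"
    by (subst sum_nonneg_eq_0_iff) auto
  also have "\<dots> \<longleftrightarrow> t = term_of x"
    using assms unfolding instances_def term_of_def by auto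
  finally show ?thesis .
qed

theorem proposition5:
  fixes n :: nat
  assumes "n > 0"
  shows "\<exists>(F :: forest) x. (\<forall>T\<in>set F. tree_over n T) \<and> x \<in> instances n \<and>
           (\<forall>t. tree_specific n F x t \<longleftrightarrow> t = term_of x) \<and>
           (\<forall>t. sufficient_reason n F x t \<longleftrightarrow> t = {})"
proof (intro exI conjI allI)
  let ?F = "cancelling_forest n" and ?x = "replicate n True"
  have x: "?x \<in> instances n"
    unfolding instances_def by simp
  have never_positive: "\<not> BT ?F y" for y
    unfolding BT_def wF_cancelling_forest by simp
  show "\<forall>T\<in>set ?F. tree_over n T"
    unfolding cancelling_forest_def by auto
  show "?x \<in> instances n"
    by (fact x)
  show "tree_specific n ?F ?x t \<longleftrightarrow> t = term_of ?x" for t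
    using tree_specific_neg_iff never_positive ts_neg_cancelling_forest_iff[OF x] by blast
  show "sufficient_reason n ?F ?x t \<longleftrightarrow> t = {}" for t
    using sufficient_reason_iff_empty_if_BT_constant never_positive by blast
qed

end
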